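(* Let $n\ge2$ and consider Gram blocks of a fully symmetric solution: $P_1,\dots,P_n\in\mathbb{R}^{d\times p}$ with $P_i^TP_i=G^A$ for all $i$ and $P_i^TP_j=G^C$ for all $i\ne j$, and let $G^T=\frac1n(G^A+(n-1)G^C)$, $G^D=G^A-G^T$. Let $\xi_{g^*},\xi_{x^*}\in\mathbb{R}^p$ and $g_i^*=P_i\xi_{g^*}$, $x_i^*=P_i\xi_{x^*}$ ($g_i^*$ representing $\nabla f_i(x_i^* )$). Then the optimality constraints $\frac1n\sum_{i=1}^ng_i^*=0$ and $x_i^*=x_j^*$ for all $i,j$ are equivalent to $\xi_{g^*}^TG^T\xi_{g^*}=0$ and $\xi_{x^*}^TG^D\xi_{x^*}=0$.
   Context: This arises in performance estimation problems for distributed optimization of $\frac1n\sum_if_i(x)$ where each agent holds a copy $x_i^*$ of the minimizer $x^*$ and the gradient of its local function there; the system-level stationarity condition is $\frac1n\sum_i\nabla f_i(x^* )=0$. *)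

theory Defs
  imports "HOL-Analysis.Analysis"
begin

end

theory Submission
  imports Defs
begin

text \<open>For a fixed vector v the blocks turn v into the family u_i = P_i v, whose Gram matrix
  has diagonal a = v^T G^A v and off-diagonal entries c = v^T G^C v. For such a family the
  squared norm of the sum is n (a + (n - 1) c) = n^2 v^T G^T v, and the u_i all coincide iff
  a = c, that is iff v^T G^D v = (n - 1)/n (a - c) vanishes.\<close>

lemma inner_matrix_vector_mult:
  fixes A :: "real ^ 'n ^ 'm" and B :: "real ^ 'k ^ 'm"
  shows "(A *v x) \<bullet> (B *v y) = x \<bullet> ((transpose A ** B) *v y)"
proof -
  have "(A *v x) \<bullet> (B *v y) = (x v* transpose A) \<bullet> (B *v y)" by simp
  also have "\<dots> = x \<bullet> (transpose A *v (B *v y))" by (rule dot_lmul_matrix)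
  finally show ?thesis by (simp only: matrix_vector_mul_assoc)
qed

locale equiangular_family =
  fixes I :: "'i set" and u :: "'i \<Rightarrow> 'a :: real_inner" and a c :: real
  assumes finite_index: "finite I"
    and inner_self: "i \<in> I \<Longrightarrow> u i \<bullet> u i = a"
    and inner_distinct: "i \<in> I \<Longrightarrow> j \<in> I \<Longrightarrow> i \<noteq> j \<Longrightarrow> u i \<bullet> u j = c"
begin

lemma norm_sum_squared: "(norm (\<Sum>i\<in>I. u i))\<^sup>2 = real (card I) * (a + (real (card I) - 1) * c)"
proof -
  have row: "(\<Sum>j\<in>I. u i \<bullet> u j) = a + (real (card I) - 1) * c" if "i \<in> I" for i
  proof -
    have "card I \<ge> 1"
      using that finite_index by (auto simp: Suc_le_eq card_gt_0_iff)
    have off_diagonal: "(\<Sum>j\<in>I - {i}. u i \<bullet> u j) = (\<Sum>j\<in>I - {i}. c)"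
      by (rule sum.cong) (use that in \<open>auto intro: inner_distinct\<close>)
    have "(\<Sum>j\<in>I. u i \<bullet> u j) = u i \<bullet> u i + (\<Sum>j\<in>I - {i}. u i \<bullet> u j)"
      using that finite_index by (simp add: sum.remove)
    also have "\<dots> = a + (real (card I) - 1) * c"
      using that finite_index \<open>card I \<ge> 1\<close>
      by (simp add: off_diagonal inner_self card_Diff_singleton of_nat_diff)
    finally show ?thesis .
  qed
  have "(norm (\<Sum>i\<in>I. u i))\<^sup>2 = (\<Sum>i\<in>I. \<Sum>j\<in>I. u i \<bullet> u j)"
    by (simp add: power2_norm_eq_inner inner_sum_left inner_sum_right) (rule sum.swap)
  also have "\<dots> = (\<Sum>i\<in>I. a + (real (card I) - 1) * c)"
    by (rule sum.cong) (simp_all add: row)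
  finally show ?thesis by simp
qed

lemma sum_eq_0_iff:
  assumes "I \<noteq> {}"
  shows "(\<Sum>i\<in>I. u i) = 0 \<longleftrightarrow> a + (real (card I) - 1) * c = 0"
proof -
  have "card I > 0" using assms finite_index by (simp add: card_gt_0_iff)
  have "(\<Sum>i\<in>I. u i) = 0 \<longleftrightarrow> (norm (\<Sum>i\<in>I. u i))\<^sup>2 = 0" by simp
  also have "\<dots> \<longleftrightarrow> a + (real (card I) - 1) * c = 0"
    using \<open>card I > 0\<close> by (simp add: norm_sum_squared)
  finally show ?thesis .
qed

lemma all_equal_iff:
  assumes "i\<^sub>0 \<in> I" "j\<^sub>0 \<in> I" "i\<^sub>0 \<noteq> j\<^sub>0"
  shows "(\<forall>i\<in>I. \<forall>j\<in>I. u i = u j) \<longleftrightarrow> a = c"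
proof
  assume "\<forall>i\<in>I. \<forall>j\<in>I. u i = u j"
  then have "u i\<^sub>0 = u j\<^sub>0" using assms by blast
  have "a = u i\<^sub>0 \<bullet> u i\<^sub>0" using assms by (simp add: inner_self)
  also have "\<dots> = u i\<^sub>0 \<bullet> u j\<^sub>0" using \<open>u i\<^sub>0 = u j\<^sub>0\<close> by simp
  also have "\<dots> = c" using assms by (simp add: inner_distinct)
  finally show "a = c" .
next
  assume "a = c"
  have "u i = u j" if "i \<in> I" "j \<in> I" "i \<noteq> j" for i j
  proof -
    have "(norm (u i - u j))\<^sup>2 = u i \<bullet> u i + u j \<bullet> u j - 2 * (u i \<bullet> u j)"
      by (simp add: power2_norm_eq_inner inner_diff_left inner_diff_right inner_commute)
    also have "\<dots> = 0"
      using that \<open>a = c\<close> by (simp add: inner_self inner_distinct)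
    finally show ?thesis by simp
  qed
  then show "\<forall>i\<in>I. \<forall>j\<in>I. u i = u j" by blast
qed

end

theorem proposition10:
  fixes n :: nat
    and P :: "nat \<Rightarrow> real ^ 'p ^ 'd"
    and GA GC GT GD :: "real ^ 'p ^ 'p"
    and xi_g xi_x :: "real ^ 'p"
    and g x :: "nat \<Rightarrow> real ^ 'd"
  assumes n2: "n \<ge> 2"
    and hA: "\<And>i. i < n \<Longrightarrow> transpose (P i) ** P i = GA"
    and hC: "\<And>i j. i < n \<Longrightarrow> j < n \<Longrightarrow> i \<noteq> j \<Longrightarrow> transpose (P i) ** P j = GC"
    and hT: "GT = (1 / real n) *\<^sub>R (GA + (real n - 1) *\<^sub>R GC)"
    and hD: "GD = GA - GT"
    and hg: "\<And>i. g i = P i *v xi_g"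
    and hx: "\<And>i. x i = P i *v xi_x"
  shows "(((1 / real n) *\<^sub>R (\<Sum>i<n. g i) = 0) \<and> (\<forall>i<n. \<forall>j<n. x i = x j))
     \<longleftrightarrow> (xi_g \<bullet> (GT *v xi_g) = 0 \<and> xi_x \<bullet> (GD *v xi_x) = 0)"
proof -
  define a where "a v = v \<bullet> (GA *v v)" for v
  define c where "c v = v \<bullet> (GC *v v)" for v
  have family: "equiangular_family {..<n} (\<lambda>i. P i *v v) (a v) (c v)" for v
    by unfold_locales (simp_all add: inner_matrix_vector_mult hA hC a_def c_def)
  have GT_form: "v \<bullet> (GT *v v) = (a v + (real n - 1) * c v) / real n" for v
    by (simp add: hT a_def c_def scaleR_matrix_vector_assoc[symmetric]
        matrix_vector_mult_add_rdistrib inner_add_right)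
  have GD_form: "v \<bullet> (GD *v v) = (real n - 1) / real n * (a v - c v)" for v
    using n2 by (simp add: hD GT_form a_def matrix_vector_mult_diff_rdistrib inner_diff_right
        field_simps)
  have "(1 / real n) *\<^sub>R (\<Sum>i<n. g i) = 0 \<longleftrightarrow> xi_g \<bullet> (GT *v xi_g) = 0"
    using n2 equiangular_family.sum_eq_0_iff[OF family, of xi_g]
    by (simp add: hg GT_form lessThan_empty_iff)
  moreover have "(\<forall>i<n. \<forall>j<n. x i = x j) \<longleftrightarrow> xi_x \<bullet> (GD *v xi_x) = 0"
    using n2 equiangular_family.all_equal_iff[OF family, of 0 1 xi_x]
    by (simp add: hx GD_form Ball_def)
  ultimately show ?thesis by blast
qed

end
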